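(* Let $N,M\ge 1$, $1\le Q\le N$, and let $\mathbf{P}\in\mathbb{C}^{N\times Q}$ be deterministic with unit-norm rows. Let $\mathbf{x}\in\mathbb{C}^{N}$ be a random input with an arbitrary distribution, independent of everything else. Let $\mathbf{Y}=\mathbf{S}\mathbf{P}^{T}\mathrm{diag}\{\mathbf{x}\}+\mathbf{W}$ with $\mathbf{S}\in\mathbb{C}^{M\times Q}$ and $\mathbf{W}\in\mathbb{C}^{M\times N}$ having i.i.d. $\mathcal{CN}(0,1)$ entries. Let $\mathbf{Y}'=\mathbf{s}'\mathbf{x}^{T}+\mathbf{W}'$, where $\mathbf{s}'\sim\mathcal{CN}(\mathbf{0},\mathbf{I}_{QM})$ and $\mathbf{W}'\in\mathbb{C}^{QM\times N}$ has i.i.d. $\mathcal{CN}(0,1)$ entries, with $\mathbf{x},\mathbf{s}',\mathbf{W}'$ independent. Then $I(\mathbf{x};\mathbf{Y})\le I(\mathbf{x};\mathbf{Y}')$. Consequently, for every $\rho>0$, the capacity under the constraint $\mathbb{E}[\|\mathbf{x}\|^2]\le N\rho$ of the first channel (rank $Q$, $M$ receive antennas) is at most the capacity under the same constraint of the second channel (rank $1$, $QM$ receive antennas). *)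

theory Defs
  imports "HOL-Probability.Probability"
begin

definition cgauss :: "complex measure" where
  "cgauss = density lborel (\<lambda>z. ennreal (exp (- (cmod z)\<^sup>2) / pi))"

definition iid_cgauss_vec :: "(complex ^ 'i::finite) measure" where
  "iid_cgauss_vec = distr (\<Pi>\<^sub>M i\<in>UNIV. cgauss) borel (\<lambda>f. \<chi> i. f i)"

definition iid_cgauss_mat :: "(complex ^ 'c::finite ^ 'r::finite) measure" where
  "iid_cgauss_mat = distr (\<Pi>\<^sub>M ij\<in>UNIV. cgauss) borel (\<lambda>f. \<chi> i j. f (i, j))"

definition diag_mat :: "complex ^ 'n::finite \<Rightarrow> complex ^ 'n ^ 'n" where
  "diag_mat x = (\<chi> i j. if i = j then x $ i else 0)"

text \<open>Kullback-Leibler divergence D(P || Q) in nats, valued in [0, infinity]: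
  infinite unless P is absolutely continuous w.r.t. Q; otherwise, with f = dP/dQ,
  D = integral of f ln f dQ, written as the integral of the nonnegative
  f ln f - f + 1 (equal since both are probability measures; 0 ln 0 = 0).\<close>
definition KL_div :: "'a measure \<Rightarrow> 'a measure \<Rightarrow> ennreal" where
  "KL_div P Q =
    (if absolutely_continuous Q P then
       \<integral>\<^sup>+ \<omega>. ennreal (let f = enn2real (RN_deriv Q P \<omega>) in
                        if f = 0 then 1 else f * ln f - f + 1) \<partial>Q
     else \<infinity>)"

definition mutual_info :: "('a::topological_space \<times> 'b::topological_space) measure \<Rightarrow> ennreal" where
  "mutual_info J = KL_div J (distr J borel fst \<Otimes>\<^sub>M distr J borel snd)"

definition channel1 :: "complex ^ 'q::finite ^ 'n::finite \<Rightarrow> (complex ^ 'n) measure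
     \<Rightarrow> ((complex ^ 'n) \<times> (complex ^ 'n ^ 'm::finite)) measure" where
  "channel1 P \<mu> =
     distr (\<mu> \<Otimes>\<^sub>M ((iid_cgauss_mat :: (complex ^ 'q ^ 'm) measure) \<Otimes>\<^sub>M
                    (iid_cgauss_mat :: (complex ^ 'n ^ 'm) measure)))
       (borel \<Otimes>\<^sub>M borel)
       (\<lambda>(x, S, W). (x, S ** transpose P ** diag_mat x + W))"

text \<open>Channel 2: Y' = s' x^T + W', s' (QM) ~ CN(0, I), W' (QM x N) i.i.d. CN(0,1),
  x ~ mu, all independent (rows indexed by 'q x 'm, so QM of them).\<close>
definition channel2 :: "(complex ^ 'n::finite) measure
     \<Rightarrow> ((complex ^ 'n) \<times> (complex ^ 'n ^ ('q::finite \<times> 'm::finite))) measure" where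
  "channel2 \<mu> =
     distr (\<mu> \<Otimes>\<^sub>M ((iid_cgauss_vec :: (complex ^ ('q \<times> 'm)) measure) \<Otimes>\<^sub>M
                    (iid_cgauss_mat :: (complex ^ 'n ^ ('q \<times> 'm)) measure)))
       (borel \<Otimes>\<^sub>M borel)
       (\<lambda>(x, s, W). (x, (\<chi> r c. s $ r * x $ c) + W))"

definition input_law :: "(complex ^ 'n::finite) measure \<Rightarrow> bool" where
  "input_law \<mu> \<longleftrightarrow> prob_space \<mu> \<and> sets \<mu> = sets (borel :: (complex ^ 'n) measure)"

definition capacity :: "((complex ^ 'n::finite) measure \<Rightarrow> ((complex ^ 'n) \<times> 'y::topological_space) measure)
     \<Rightarrow> real \<Rightarrow> ennreal" where
  "capacity ch \<rho> =
     (SUP \<mu> \<in> {\<mu>. input_law \<mu> \<and>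
                 (\<integral>\<^sup>+ x. ennreal ((norm x)\<^sup>2) \<partial>\<mu>) \<le> ennreal (real CARD('n) * \<rho>)}.
        mutual_info (ch \<mu>))"

end

theory Submission
  imports Defs
begin

text \<open>
  Index the \<open>QM\<close> rows of \<open>Y' = s' x\<^sup>T + W'\<close> by pairs \<open>(q, m)\<close> and post-process by
  \<open>(L Y')\<^sub>m\<^sub>n = \<Sum>\<^sub>q P\<^sub>n\<^sub>q Y'\<^sub>(\<^sub>q\<^sub>,\<^sub>m\<^sub>)\<^sub>n\<close>.  Then \<open>L Y' = S P\<^sup>T diag(x) + L W'\<close> with \<open>S\<^sub>m\<^sub>q = s'\<^sub>(\<^sub>q\<^sub>,\<^sub>m\<^sub>)\<close>.
  Here \<open>S\<close> is an i.i.d. \<open>CN(0,1)\<close> matrix and, because the rows of \<open>P\<close> have unit norm and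
  \<open>CN(0,1)\<close> is circularly symmetric, so is \<open>L W'\<close>, independently of \<open>S\<close>.  Hence
  \<open>(x, L Y')\<close> has exactly the law of \<open>(x, Y)\<close>, and the data-processing inequality gives
  \<open>I(x;Y) \<le> I(x;Y')\<close>; the capacity bound follows by taking suprema over the same inputs.
\<close>

section \<open>Data processing for KL divergence and mutual information\<close>

definition kl_phi :: "real \<Rightarrow> real" where
  "kl_phi t = t * ln t - t + 1"

lemma borel_measurable_kl_phi [measurable]: "kl_phi \<in> borel_measurable borel"
  unfolding kl_phi_def by measurable

lemma KL_div_kl_phi:
  "KL_div P Q = (if absolutely_continuous Q P then
       \<integral>\<^sup>+ \<omega>. ennreal (kl_phi (enn2real (RN_deriv Q P \<omega>))) \<partial>Q else \<infinity>)"
proof -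
  have "\<And>f::real. (if f = 0 then 1 else f * ln f - f + 1) = kl_phi f"
    by (simp add: kl_phi_def)
  then show ?thesis unfolding KL_div_def Let_def by simp
qed

text \<open>The tangent of \<open>kl_phi\<close> at \<open>c > 0\<close> lies below its graph (from \<open>ln u \<le> u - 1\<close>).\<close>
lemma kl_phi_tangent_le:
  assumes "t \<ge> 0" "c > 0"
  shows "1 - c + t * ln c \<le> kl_phi t"
proof (cases "t = 0")
  case True
  then show ?thesis using assms by (simp add: kl_phi_def)
next
  case False
  then have t: "t > 0" using assms by auto
  have "ln (c / t) \<le> c / t - 1" using assms t by (intro ln_le_minus_one) auto
  then have "t * ln (c / t) \<le> t * (c / t - 1)" using t by (intro mult_left_mono) auto
  then have "t * ln c - t * ln t \<le> c - t" using t assms by (simp add: ln_div algebra_simps)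
  then show ?thesis by (simp add: kl_phi_def)
qed

lemma kl_phi_nonneg: "t \<ge> 0 \<Longrightarrow> kl_phi t \<ge> 0"
  using kl_phi_tangent_le[of t 1] by simp

text \<open>Conversely, \<open>kl_phi\<close> is the supremum of its tangents at positive \<^emph>\<open>rational\<close>
  points; countably many tangents suffice for an almost-everywhere Jensen argument.\<close>
lemma kl_phi_le_of_rat_tangents:
  fixes g y :: real
  assumes g: "g \<ge> 0" and tangents: "\<And>c. c \<in> \<rat> \<Longrightarrow> c > 0 \<Longrightarrow> 1 - c + g * ln c \<le> y"
  shows "kl_phi g \<le> y"
proof (rule ccontr)
  assume "\<not> kl_phi g \<le> y"
  then have less: "y < kl_phi g" by simp
  show False
  proof (cases "g = 0")
    case True
    then have "y < 1" using less by (simp add: kl_phi_def)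
    then obtain c where c: "c \<in> \<rat>" "0 < c" "c < 1 - y"
      using Rats_dense_in_real[of 0 "1 - y"] by auto
    then show False using tangents[OF c(1,2)] True by simp
  next
    case False
    then have g_pos: "g > 0" using g by simp
    have "isCont (\<lambda>c. 1 - c + g * ln c) g" using g_pos by (intro continuous_intros) auto
    moreover have "1 - g + g * ln g = kl_phi g" by (simp add: kl_phi_def)
    ultimately have "((\<lambda>c. 1 - c + g * ln c) \<longlongrightarrow> kl_phi g) (at g)"
      by (simp add: isCont_def)
    then have "eventually (\<lambda>c. y < 1 - c + g * ln c) (at g)"
      using less by (rule order_tendstoD)
    then obtain d where d: "d > 0" "\<And>c. c \<noteq> g \<Longrightarrow> dist c g < d \<Longrightarrow> y < 1 - c + g * ln c"
      unfolding eventually_at by auto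
    obtain c where c: "c \<in> \<rat>" "g < c" "c < g + d"
      using Rats_dense_in_real[of g "g + d"] d by auto
    have "y < 1 - c + g * ln c" using c d by (intro d(2)) (auto simp: dist_real_def)
    then show False using tangents[OF c(1)] c g_pos by force
  qed
qed

context finite_measure_subalgebra
begin

text \<open>The library version needs an open
  domain of convexity, whereas \<open>kl_phi\<close> is only convex on \<open>[0, \<infinity>)\<close>; we argue directly
  with the countably many rational tangents.\<close>
lemma real_cond_exp_kl_phi_le:
  assumes h_int: "integrable M h" and h_nonneg: "\<And>x. h x \<ge> 0"
    and phi_int: "integrable M (\<lambda>x. kl_phi (h x))"
  shows "AE x in M. kl_phi (real_cond_exp M F h x) \<le> real_cond_exp M F (\<lambda>x. kl_phi (h x)) x"
proof -
  have tangent: "AE x in M. 1 - c + real_cond_exp M F h x * ln c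
                   \<le> real_cond_exp M F (\<lambda>x. kl_phi (h x)) x" if c: "c > 0" for c
  proof -
    have "AE x in M. real_cond_exp M F (\<lambda>x. (1 - c) + ln c * h x) x
                   \<le> real_cond_exp M F (\<lambda>x. kl_phi (h x)) x"
      using h_int phi_int kl_phi_tangent_le[OF h_nonneg c]
      by (intro real_cond_exp_mono) (auto simp: algebra_simps)
    moreover have "AE x in M. real_cond_exp M F (\<lambda>x. (1 - c) + ln c * h x) x
                   = real_cond_exp M F (\<lambda>x. 1 - c) x + real_cond_exp M F (\<lambda>x. ln c * h x) x"
      using h_int by (intro real_cond_exp_add) auto
    moreover have "AE x in M. real_cond_exp M F (\<lambda>x. 1 - c) x = 1 - c"
      by (intro real_cond_exp_F_meas) auto
    moreover have "AE x in M. real_cond_exp M F (\<lambda>x. ln c * h x) x = ln c * real_cond_exp M F h x"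
      using h_int by (intro real_cond_exp_cmult)
    ultimately show ?thesis by eventually_elim (simp add: algebra_simps)
  qed
  have "AE x in M. \<forall>c\<in>\<rat> \<inter> {0<..}. 1 - c + real_cond_exp M F h x * ln c
                     \<le> real_cond_exp M F (\<lambda>x. kl_phi (h x)) x"
    using tangent by (subst AE_ball_countable) (auto intro: countable_rat)
  moreover have "AE x in M. real_cond_exp M F h x \<ge> 0"
    using h_int h_nonneg by (intro real_cond_exp_pos) auto
  ultimately show ?thesis
  proof eventually_elim
    case (elim x)
    then show ?case by (intro kl_phi_le_of_rat_tangents) auto
  qed
qed

lemma integral_kl_phi_real_cond_exp_le:
  assumes h_int: "integrable M h" and h_nonneg: "\<And>x. h x \<ge> 0"
    and phi_int: "integrable M (\<lambda>x. kl_phi (h x))"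
  shows "integrable M (\<lambda>x. kl_phi (real_cond_exp M F h x))"
    and "(\<integral>x. kl_phi (real_cond_exp M F h x) \<partial>M) \<le> (\<integral>x. kl_phi (h x) \<partial>M)"
proof -
  note jensen = real_cond_exp_kl_phi_le[OF assms]
  have cond_int: "integrable M (real_cond_exp M F (\<lambda>x. kl_phi (h x)))"
    using phi_int by (rule real_cond_exp_int(1))
  have "AE x in M. real_cond_exp M F h x \<ge> 0"
    using h_int h_nonneg by (intro real_cond_exp_pos) auto
  with jensen have "AE x in M. norm (kl_phi (real_cond_exp M F h x))
                      \<le> norm (real_cond_exp M F (\<lambda>x. kl_phi (h x)) x)"
    by eventually_elim (simp add: kl_phi_nonneg)
  then show phi_cond_int: "integrable M (\<lambda>x. kl_phi (real_cond_exp M F h x))"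
    by (intro Bochner_Integration.integrable_bound[OF cond_int]) measurable
  have "(\<integral>x. kl_phi (real_cond_exp M F h x) \<partial>M)
        \<le> (\<integral>x. real_cond_exp M F (\<lambda>x. kl_phi (h x)) x \<partial>M)"
    by (rule integral_mono_AE[OF phi_cond_int cond_int jensen])
  also have "\<dots> = (\<integral>x. kl_phi (h x) \<partial>M)"
    using phi_int by (rule real_cond_exp_int(2))
  finally show "(\<integral>x. kl_phi (real_cond_exp M F h x) \<partial>M) \<le> (\<integral>x. kl_phi (h x) \<partial>M)" .
qed

end

lemma set_integral_RN_deriv:
  assumes M: "sigma_finite_measure M" and ac: "absolutely_continuous M N"
    and sN: "sets N = sets M" and N: "finite_measure N" and A: "A \<in> sets M"
  shows "(\<integral>x\<in>A. enn2real (RN_deriv M N x) \<partial>M) = measure N A"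
proof -
  interpret M: sigma_finite_measure M by fact
  interpret N: finite_measure N by fact
  have fin: "AE x in M. RN_deriv M N x \<noteq> \<infinity>"
    by (rule M.RN_deriv_finite[OF _ ac sN]) (simp add: N.sigma_finite_measure_axioms)
  have "(\<integral>\<^sup>+x. ennreal (indicator A x * enn2real (RN_deriv M N x)) \<partial>M)
        = (\<integral>\<^sup>+x. RN_deriv M N x * indicator A x \<partial>M)"
    using fin by (intro nn_integral_cong_AE)
      (auto simp: indicator_def ennreal_enn2real_if less_top)
  also have "\<dots> = emeasure (density M (RN_deriv M N)) A"
    using A by (simp add: emeasure_density)
  also have "\<dots> = emeasure N A"
    using M.density_RN_deriv[OF ac sN] by simp
  finally have eq: "(\<integral>\<^sup>+x. ennreal (indicator A x * enn2real (RN_deriv M N x)) \<partial>M)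
                    = emeasure N A" .
  have "(\<integral>x\<in>A. enn2real (RN_deriv M N x) \<partial>M)
        = (\<integral>x. indicator A x * enn2real (RN_deriv M N x) \<partial>M)"
    by (simp add: set_lebesgue_integral_def)
  also have "\<dots> = enn2real (\<integral>\<^sup>+x. ennreal (indicator A x * enn2real (RN_deriv M N x)) \<partial>M)"
    using A by (intro integral_eq_nn_integral) auto
  finally show ?thesis using eq by (simp add: measure_def)
qed

lemma integrable_RN_deriv:
  assumes M: "sigma_finite_measure M" and ac: "absolutely_continuous M N"
    and sN: "sets N = sets M" and N: "finite_measure N"
  shows "integrable M (\<lambda>x. enn2real (RN_deriv M N x))"
proof (rule integrableI_nonneg)
  interpret M: sigma_finite_measure M by fact
  interpret N: finite_measure N by fact
  have "(\<integral>\<^sup>+x. ennreal (enn2real (RN_deriv M N x)) \<partial>M) \<le> (\<integral>\<^sup>+x. RN_deriv M N x \<partial>M)"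
    by (intro nn_integral_mono) (simp add: ennreal_enn2real_if)
  also have "\<dots> = emeasure (density M (RN_deriv M N)) (space M)"
    by (simp add: emeasure_density)
  also have "\<dots> = emeasure N (space N)"
    using M.density_RN_deriv[OF ac sN] sets_eq_imp_space_eq[OF sN] by simp
  also have "\<dots> < \<infinity>"
    using N.emeasure_finite[of "space N"] by (simp add: less_top[symmetric])
  finally show "(\<integral>\<^sup>+x. ennreal (enn2real (RN_deriv M N x)) \<partial>M) < \<infinity>" .
qed auto

lemma absolutely_continuous_distr:
  assumes ac: "absolutely_continuous Q P" and sPQ: "sets P = sets Q"
    and F: "F \<in> measurable Q N"
  shows "absolutely_continuous (distr Q N F) (distr P N F)"
  unfolding absolutely_continuous_def
proof
  have F': "F \<in> measurable P N" using F by (simp add: measurable_cong_sets[OF sPQ refl])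
  fix B assume "B \<in> null_sets (distr Q N F)"
  then have "F -` B \<inter> space Q \<in> null_sets Q" "B \<in> sets N"
    using null_sets_distr_iff[OF F] by auto
  then have "F -` B \<inter> space P \<in> null_sets P"
    using ac sets_eq_imp_space_eq[OF sPQ] unfolding absolutely_continuous_def by auto
  then show "B \<in> null_sets (distr P N F)"
    using null_sets_distr_iff[OF F'] \<open>B \<in> sets N\<close> by auto
qed

lemma real_cond_exp_RN_deriv_distr:
  assumes Q: "prob_space Q" and P: "prob_space P" and sPQ: "sets P = sets Q"
    and ac: "absolutely_continuous Q P" and F[measurable]: "F \<in> measurable Q N"
  shows "AE x in Q. real_cond_exp Q (vimage_algebra (space Q) F N)
                      (\<lambda>x. enn2real (RN_deriv Q P x)) x
                    = enn2real (RN_deriv (distr Q N F) (distr P N F) (F x))"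
proof -
  interpret Q: prob_space Q by fact
  interpret P: prob_space P by fact
  define G where "G = vimage_algebra (space Q) F N"
  define Q' where "Q' = distr Q N F"
  define P' where "P' = distr P N F"
  have F': "F \<in> measurable P N" using F by (simp add: measurable_cong_sets[OF sPQ refl])
  interpret Q': prob_space Q' unfolding Q'_def by (rule Q.prob_space_distr[OF F])
  interpret P': prob_space P' unfolding P'_def by (rule P.prob_space_distr[OF F'])
  have sP': "sets P' = sets Q'" by (simp add: P'_def Q'_def)
  have ac': "absolutely_continuous Q' P'"
    unfolding P'_def Q'_def using ac sPQ F by (rule absolutely_continuous_distr)
  define h where "h = (\<lambda>x. enn2real (RN_deriv Q P x))"
  define g where "g x = enn2real (RN_deriv Q' P' (F x))" for x
  have [measurable]: "RN_deriv Q' P' \<in> borel_measurable N"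
    using borel_measurable_RN_deriv[of Q' P'] by (simp add: Q'_def)
  have subalg: "subalgebra Q G"
    unfolding subalgebra_def G_def using sets_image_in_sets[OF refl F] by simp
  interpret S: finite_measure_subalgebra Q G
    by unfold_locales (rule subalg)
  have FG: "F \<in> measurable G N"
    unfolding G_def using measurable_space[OF F] by (intro measurable_vimage_algebra1) auto
  have g_int: "integrable Q g"
  proof -
    have "integrable Q' (\<lambda>y. enn2real (RN_deriv Q' P' y))"
      using Q'.sigma_finite_measure_axioms ac' sP' P'.finite_measure_axioms
      by (rule integrable_RN_deriv)
    then show ?thesis unfolding g_def Q'_def by (subst (asm) integrable_distr_eq) auto
  qed
  have "AE x in Q. real_cond_exp Q G h x = g x"
  proof (rule S.real_cond_exp_charact)
    fix A assume "A \<in> sets G"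
    then obtain B where B: "B \<in> sets N" "A = F -` B \<inter> space Q"
      unfolding G_def using sets_vimage_algebra2[of F "space Q" N] measurable_space[OF F]
      by auto
    have "(\<integral>x\<in>A. h x \<partial>Q) = measure P A"
      unfolding h_def using Q.sigma_finite_measure_axioms ac sPQ P.finite_measure_axioms
      by (rule set_integral_RN_deriv) (use B(1) in \<open>simp add: B(2)\<close>)
    also have "\<dots> = measure P' B"
      using B sets_eq_imp_space_eq[OF sPQ] by (simp add: P'_def measure_distr[OF F'])
    also have "\<dots> = (\<integral>y\<in>B. enn2real (RN_deriv Q' P' y) \<partial>Q')"
      using Q'.sigma_finite_measure_axioms ac' sP' P'.finite_measure_axioms
      by (rule set_integral_RN_deriv[symmetric]) (simp add: Q'_def B)
    also have "\<dots> = (\<integral>x\<in>A. g x \<partial>Q)"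
      using B unfolding set_lebesgue_integral_def Q'_def g_def
      by (subst integral_distr[OF F]) (auto intro!: Bochner_Integration.integral_cong
          simp: indicator_def)
    finally show "(\<integral>x\<in>A. h x \<partial>Q) = (\<integral>x\<in>A. g x \<partial>Q)" .
  next
    show "integrable Q h"
      unfolding h_def using Q.sigma_finite_measure_axioms ac sPQ P.finite_measure_axioms
      by (rule integrable_RN_deriv)
    show "g \<in> borel_measurable G"
      unfolding g_def using FG by measurable
  qed (rule g_int)
  then show ?thesis unfolding G_def h_def g_def Q'_def P'_def .
qed

text \<open>The density of
  the image laws is a conditional expectation of the original density, so this is
  conditional Jensen for \<open>kl_phi\<close>.\<close>
lemma KL_div_distr_le:
  assumes Q: "prob_space Q" and P: "prob_space P" and sPQ: "sets P = sets Q"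
    and F[measurable]: "F \<in> measurable Q N"
  shows "KL_div (distr P N F) (distr Q N F) \<le> KL_div P Q"
proof (cases "absolutely_continuous Q P")
  case False
  then show ?thesis by (simp add: KL_div_def)
next
  case ac: True
  interpret Q: prob_space Q by fact
  interpret P: prob_space P by fact
  define G where "G = vimage_algebra (space Q) F N"
  define h where "h = (\<lambda>x. enn2real (RN_deriv Q P x))"
  define g where "g = (\<lambda>x. enn2real (RN_deriv (distr Q N F) (distr P N F) (F x)))"
  have [measurable]: "RN_deriv (distr Q N F) (distr P N F) \<in> borel_measurable N"
    using borel_measurable_RN_deriv[of "distr Q N F"] by simp
  have h_nonneg: "\<And>x. h x \<ge> 0" and g_nonneg: "\<And>x. g x \<ge> 0"
    by (simp_all add: h_def g_def)
  have KL_orig: "KL_div P Q = (\<integral>\<^sup>+x. ennreal (kl_phi (h x)) \<partial>Q)"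
    using ac by (simp add: KL_div_kl_phi h_def)
  have KL_image: "KL_div (distr P N F) (distr Q N F) = (\<integral>\<^sup>+x. ennreal (kl_phi (g x)) \<partial>Q)"
    using absolutely_continuous_distr[OF ac sPQ F]
    by (simp add: KL_div_kl_phi g_def nn_integral_distr)
  show ?thesis
  proof (cases "(\<integral>\<^sup>+x. ennreal (kl_phi (h x)) \<partial>Q) = \<infinity>")
    case True
    then show ?thesis using KL_orig by simp
  next
    case False
    then have phi_h_int: "integrable Q (\<lambda>x. kl_phi (h x))"
      by (intro integrableI_nonneg) (auto simp: h_def kl_phi_nonneg less_top)
    have h_int: "integrable Q h"
      unfolding h_def using Q.sigma_finite_measure_axioms ac sPQ P.finite_measure_axioms
      by (rule integrable_RN_deriv)
    have "subalgebra Q G"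
      unfolding subalgebra_def G_def using sets_image_in_sets[OF refl F] by simp
    then interpret S: finite_measure_subalgebra Q G
      by unfold_locales
    have cond_exp_eq: "AE x in Q. real_cond_exp Q G h x = g x"
      unfolding G_def h_def g_def using Q P sPQ ac F by (rule real_cond_exp_RN_deriv_distr)
    note jensen = S.integral_kl_phi_real_cond_exp_le[OF h_int h_nonneg phi_h_int]
    have phi_cond_eq: "AE x in Q. kl_phi (real_cond_exp Q G h x) = kl_phi (g x)"
      using cond_exp_eq by eventually_elim simp
    have phi_g_int: "integrable Q (\<lambda>x. kl_phi (g x))"
      using jensen(1) integrable_cong_AE[OF _ _ phi_cond_eq] unfolding g_def by simp
    have "(\<integral>x. kl_phi (g x) \<partial>Q) = (\<integral>x. kl_phi (real_cond_exp Q G h x) \<partial>Q)"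
      using phi_cond_eq unfolding g_def by (intro integral_cong_AE) auto
    also have "\<dots> \<le> (\<integral>x. kl_phi (h x) \<partial>Q)"
      by (rule jensen(2))
    finally have "ennreal (\<integral>x. kl_phi (g x) \<partial>Q) \<le> ennreal (\<integral>x. kl_phi (h x) \<partial>Q)"
      by (rule ennreal_leI)
    then show ?thesis
      using phi_g_int phi_h_int KL_orig KL_image
      by (simp add: nn_integral_eq_integral kl_phi_nonneg g_nonneg h_nonneg)
  qed
qed

text \<open>Both the joint law and
  the product of the marginals are pushed forward along \<open>(x, y) \<mapsto> (x, f y)\<close>.\<close>
lemma mutual_info_distr_le:
  fixes J :: "('a::topological_space \<times> 'b::topological_space) measure"
    and f :: "'b \<Rightarrow> 'c::topological_space"
  assumes J: "prob_space J" and sJ: "sets J = sets (borel \<Otimes>\<^sub>M borel)"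
    and f[measurable]: "f \<in> borel_measurable borel"
  shows "mutual_info (distr J (borel \<Otimes>\<^sub>M borel) (\<lambda>(x, y). (x, f y))) \<le> mutual_info J"
proof -
  interpret J: prob_space J by fact
  define F where "F = (\<lambda>(x::'a, y::'b). (x, f y))"
  have F_borel: "F \<in> measurable (borel \<Otimes>\<^sub>M borel) (borel \<Otimes>\<^sub>M (borel :: 'c measure))"
    unfolding F_def by measurable
  have F_J: "F \<in> measurable J (borel \<Otimes>\<^sub>M borel)"
    using F_borel by (simp add: measurable_cong_sets[OF sJ refl])
  have fst_J: "fst \<in> measurable J borel" and snd_J: "snd \<in> measurable J borel"
    by (simp_all add: measurable_cong_sets[OF sJ refl])
  define J1 where "J1 = distr J borel fst"
  define J2 where "J2 = distr J borel snd"
  interpret J1: prob_space J1 unfolding J1_def by (rule J.prob_space_distr[OF fst_J])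
  interpret J2: prob_space J2 unfolding J2_def by (rule J.prob_space_distr[OF snd_J])
  have f_J2: "f \<in> measurable J2 borel" by (simp add: J2_def)
  interpret J2f: prob_space "distr J2 borel f" by (rule J2.prob_space_distr[OF f_J2])
  define Q where "Q = J1 \<Otimes>\<^sub>M J2"
  interpret Q: prob_space Q unfolding Q_def by (rule prob_space_pair) unfold_locales
  have sQ: "sets Q = sets (borel \<Otimes>\<^sub>M borel)"
    unfolding Q_def J1_def J2_def by (intro sets_pair_measure_cong) auto
  have marginal_fst: "distr (distr J (borel \<Otimes>\<^sub>M borel) F) borel fst = J1"
    unfolding J1_def using F_J by (subst distr_distr) (auto simp: F_def comp_def split_beta)
  have marginal_snd: "distr (distr J (borel \<Otimes>\<^sub>M borel) F) borel snd = distr J2 borel f"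
    unfolding J2_def using F_J snd_J
    by (subst distr_distr, simp, simp, subst distr_distr) (auto simp: F_def comp_def split_beta)
  have "distr J1 borel (\<lambda>x. x) \<Otimes>\<^sub>M distr J2 borel f = distr Q (borel \<Otimes>\<^sub>M borel) F"
    unfolding Q_def F_def
    by (rule pair_measure_distr) (auto simp: J1_def f_J2 J2f.sigma_finite_measure_axioms)
  moreover have "distr J1 borel (\<lambda>x. x) = J1" by (rule distr_id2) (simp add: J1_def)
  ultimately have product: "J1 \<Otimes>\<^sub>M distr J2 borel f = distr Q (borel \<Otimes>\<^sub>M borel) F" by simp
  have "mutual_info (distr J (borel \<Otimes>\<^sub>M borel) F)
        = KL_div (distr J (borel \<Otimes>\<^sub>M borel) F) (distr Q (borel \<Otimes>\<^sub>M borel) F)"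
    unfolding mutual_info_def marginal_fst marginal_snd product ..
  also have "\<dots> \<le> KL_div J Q"
    by (rule KL_div_distr_le[OF Q.prob_space_axioms J])
      (auto simp: sJ sQ F_borel measurable_cong_sets[OF sQ refl])
  also have "\<dots> = mutual_info J" by (simp add: mutual_info_def Q_def J1_def J2_def)
  finally show ?thesis by (simp add: F_def)
qed

section \<open>Rotation invariance of Lebesgue measure\<close>

lemma measurable_Complex_pair:
  "(\<lambda>(x, y). Complex x y) \<in> measurable (lborel \<Otimes>\<^sub>M lborel) (borel :: complex measure)"
proof -
  have "(\<lambda>(x, y). Complex x y) = (\<lambda>p. complex_of_real (fst p) + \<i> * complex_of_real (snd p))"
    by (auto simp: complex_eq_iff)
  moreover have "(\<lambda>p. complex_of_real (fst p) + \<i> * complex_of_real (snd p))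
                   \<in> measurable (lborel \<Otimes>\<^sub>M lborel) (borel :: complex measure)"
    by measurable
  ultimately show ?thesis by simp
qed

lemma distr_lborel_pair_Complex:
  "distr (lborel \<Otimes>\<^sub>M lborel) borel (\<lambda>(x, y). Complex x y) = (lborel :: complex measure)"
proof (rule lborel_eqI[symmetric])
  fix l u :: complex
  assume le: "\<And>b. b \<in> Basis \<Longrightarrow> l \<bullet> b \<le> u \<bullet> b"
  then have le_Re: "Re l \<le> Re u" and le_Im: "Im l \<le> Im u"
    using le[of 1] le[of \<i>] by (auto simp: Basis_complex_def)
  have preimage: "(\<lambda>(x, y). Complex x y) -` box l u \<inter> space (lborel \<Otimes>\<^sub>M lborel)
                  = {Re l <..< Re u} \<times> {Im l <..< Im u}"
    by (auto simp: box_def Basis_complex_def space_pair_measure)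
  have "emeasure (distr (lborel \<Otimes>\<^sub>M lborel) borel (\<lambda>(x, y). Complex x y)) (box l u)
        = emeasure (lborel \<Otimes>\<^sub>M lborel) ({Re l <..< Re u} \<times> {Im l <..< Im u})"
    using measurable_Complex_pair by (simp add: emeasure_distr preimage)
  also have "\<dots> = ennreal (Re u - Re l) * ennreal (Im u - Im l)"
    using le_Re le_Im by (simp add: lborel.emeasure_pair_measure_Times)
  also have "\<dots> = (\<Prod>b\<in>Basis. (u - l) \<bullet> b)"
    using le_Re le_Im by (simp add: Basis_complex_def ennreal_mult' inner_complex_def)
  finally show "emeasure (distr (lborel \<Otimes>\<^sub>M lborel) borel (\<lambda>(x, y). Complex x y)) (box l u)
                = (\<Prod>b\<in>Basis. (u - l) \<bullet> b)" .
qed simp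

lemma nn_integral_lborel_complex:
  fixes f :: "complex \<Rightarrow> ennreal"
  assumes [measurable]: "f \<in> borel_measurable borel"
  shows "(\<integral>\<^sup>+z. f z \<partial>lborel) = (\<integral>\<^sup>+p. f (Complex (fst p) (snd p)) \<partial>(lborel \<Otimes>\<^sub>M lborel))"
  by (subst distr_lborel_pair_Complex[symmetric], subst nn_integral_distr[OF measurable_Complex_pair])
    (auto simp: split_beta)

lemma sets_lborel_pair:
  "sets ((lborel :: 'a::euclidean_space measure) \<Otimes>\<^sub>M (lborel :: 'a measure)) = sets borel"
  by (metis lborel_prod sets_lborel)

lemma borel_measurable_lborel_pair:
  "F \<in> borel_measurable borel \<Longrightarrow>
   F \<in> borel_measurable ((lborel :: 'a::euclidean_space measure) \<Otimes>\<^sub>M (lborel :: 'a measure))"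
  by (simp add: measurable_cong_sets[OF sets_lborel_pair refl])

text \<open>Shears \<open>(x, y) \<mapsto> (x + a y, y)\<close> and \<open>(x, y) \<mapsto> (x, y + a x)\<close> preserve Lebesgue
  measure on \<open>V \<times> V\<close>, by Fubini and translation invariance.\<close>
lemma nn_integral_lborel_pair_shear_fst:
  fixes F :: "'a::euclidean_space \<times> 'a \<Rightarrow> ennreal"
  assumes [measurable]: "F \<in> borel_measurable borel"
  shows "(\<integral>\<^sup>+p. F (fst p + a *\<^sub>R snd p, snd p) \<partial>(lborel \<Otimes>\<^sub>M lborel))
         = (\<integral>\<^sup>+p. F p \<partial>(lborel \<Otimes>\<^sub>M lborel))"
proof -
  note [measurable] = borel_measurable_lborel_pair[OF assms]
  have translate: "(\<integral>\<^sup>+x. F (x + a *\<^sub>R y, y) \<partial>lborel) = (\<integral>\<^sup>+x. F (x, y) \<partial>lborel)" for y :: 'a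
    by (subst (2) lborel_distr_plus[of "a *\<^sub>R y", symmetric])
      (simp add: nn_integral_distr add.commute)
  show ?thesis
    by (subst (1 2) lborel_pair.nn_integral_snd[symmetric]) (simp_all add: translate)
qed

lemma nn_integral_lborel_pair_shear_snd:
  fixes F :: "'a::euclidean_space \<times> 'a \<Rightarrow> ennreal"
  assumes [measurable]: "F \<in> borel_measurable borel"
  shows "(\<integral>\<^sup>+p. F (fst p, snd p + a *\<^sub>R fst p) \<partial>(lborel \<Otimes>\<^sub>M lborel))
         = (\<integral>\<^sup>+p. F p \<partial>(lborel \<Otimes>\<^sub>M lborel))"
proof -
  note [measurable] = borel_measurable_lborel_pair[OF assms]
  have translate: "(\<integral>\<^sup>+y. F (x, y + a *\<^sub>R x) \<partial>lborel) = (\<integral>\<^sup>+y. F (x, y) \<partial>lborel)" for x :: 'a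
    by (subst (2) lborel_distr_plus[of "a *\<^sub>R x", symmetric])
      (simp add: nn_integral_distr add.commute)
  show ?thesis
    by (subst (1 2) lborel.nn_integral_fst[symmetric]) (simp_all add: translate)
qed

text \<open>A rotation by an angle other than \<open>\<pi>\<close> is a product of three shears
  (with \<open>\<alpha> = -s/(1+c)\<close>), hence preserves Lebesgue measure on \<open>V \<times> V\<close>.\<close>
lemma nn_integral_lborel_pair_rotation:
  fixes F :: "'a::euclidean_space \<times> 'a \<Rightarrow> ennreal" and c s :: real
  assumes [measurable]: "F \<in> borel_measurable borel" and cs: "c\<^sup>2 + s\<^sup>2 = 1" "c \<noteq> -1"
  shows "(\<integral>\<^sup>+p. F (c *\<^sub>R fst p - s *\<^sub>R snd p, s *\<^sub>R fst p + c *\<^sub>R snd p) \<partial>(lborel \<Otimes>\<^sub>M lborel))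
       = (\<integral>\<^sup>+p. F p \<partial>(lborel \<Otimes>\<^sub>M lborel))"
proof -
  define \<alpha> where "\<alpha> = - s / (1 + c)"
  have c1: "1 + c \<noteq> 0" using cs by auto
  have diag: "1 + \<alpha> * s = c"
  proof -
    have "s * s = (1 - c) * (1 + c)" using cs(1) by (simp add: power2_eq_square algebra_simps)
    then have "\<alpha> * s = c - 1" using c1 by (simp add: \<alpha>_def)
    then show ?thesis by simp
  qed
  have off_diag: "2 * \<alpha> + \<alpha> * \<alpha> * s = - s"
  proof -
    have "2 * \<alpha> + \<alpha> * \<alpha> * s = \<alpha> * (1 + (1 + \<alpha> * s))" by (simp add: algebra_simps)
    also have "\<dots> = - s" using c1 diag by (simp add: \<alpha>_def)
    finally show ?thesis .
  qed
  define S1 where "S1 = (\<lambda>p::'a \<times> 'a. (fst p + \<alpha> *\<^sub>R snd p, snd p))"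
  define S2 where "S2 = (\<lambda>p::'a \<times> 'a. (fst p, snd p + s *\<^sub>R fst p))"
  have [measurable]: "S1 \<in> borel_measurable borel" "S2 \<in> borel_measurable borel"
    unfolding S1_def S2_def by (intro borel_measurable_continuous_onI continuous_intros)+
  have rotation_eq: "(c *\<^sub>R fst p - s *\<^sub>R snd p, s *\<^sub>R fst p + c *\<^sub>R snd p) = S1 (S2 (S1 p))" for p
  proof -
    have "S1 (S2 (S1 p)) = ((1 + \<alpha> * s) *\<^sub>R fst p + (2 * \<alpha> + \<alpha> * \<alpha> * s) *\<^sub>R snd p,
                           s *\<^sub>R fst p + (1 + \<alpha> * s) *\<^sub>R snd p)"
      by (simp add: S1_def S2_def algebra_simps scaleR_add_right)
        (metis mult_2_right scaleR_add_left)
    then show ?thesis using diag off_diag by simp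
  qed
  have "(\<integral>\<^sup>+p. F (c *\<^sub>R fst p - s *\<^sub>R snd p, s *\<^sub>R fst p + c *\<^sub>R snd p) \<partial>(lborel \<Otimes>\<^sub>M lborel))
        = (\<integral>\<^sup>+p. (\<lambda>q. F (S1 (S2 q))) (S1 p) \<partial>(lborel \<Otimes>\<^sub>M lborel))"
    by (simp add: rotation_eq)
  also have "\<dots> = (\<integral>\<^sup>+p. F (S1 (S2 p)) \<partial>(lborel \<Otimes>\<^sub>M lborel))"
  proof -
    have "(\<lambda>q. F (S1 (S2 q))) \<in> borel_measurable borel" by measurable
    from nn_integral_lborel_pair_shear_fst[OF this, of \<alpha>] show ?thesis by (simp add: S1_def)
  qed
  also have "\<dots> = (\<integral>\<^sup>+p. F (S1 p) \<partial>(lborel \<Otimes>\<^sub>M lborel))"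
  proof -
    have "(\<lambda>q. F (S1 q)) \<in> borel_measurable borel" by measurable
    from nn_integral_lborel_pair_shear_snd[OF this, of s] show ?thesis by (simp add: S2_def)
  qed
  also have "\<dots> = (\<integral>\<^sup>+p. F p \<partial>(lborel \<Otimes>\<^sub>M lborel))"
    unfolding S1_def by (rule nn_integral_lborel_pair_shear_fst) simp
  finally show ?thesis .
qed

text \<open>Writing \<open>w = r\<^sup>2\<close> with \<open>Re r \<ge> 0\<close> avoids the excluded rotation by \<open>\<pi>\<close>.\<close>
lemma nn_integral_lborel_complex_rotate_aux:
  fixes f :: "complex \<Rightarrow> ennreal" and w :: complex
  assumes [measurable]: "f \<in> borel_measurable borel" and w: "cmod w = 1" "w \<noteq> -1"
  shows "(\<integral>\<^sup>+z. f (w * z) \<partial>lborel) = (\<integral>\<^sup>+z. f z \<partial>lborel)"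
proof -
  define F where "F = (\<lambda>p. f (Complex (fst p) (snd p)))"
  have "(\<lambda>p::real \<times> real. Complex (fst p) (snd p)) \<in> borel_measurable borel"
    using measurable_Complex_pair by (simp add: split_beta' measurable_cong_sets[OF sets_lborel_pair])
  then have [measurable]: "F \<in> borel_measurable borel" unfolding F_def by measurable
  have cs: "(Re w)\<^sup>2 + (Im w)\<^sup>2 = 1" using w(1) cmod_power2[of w] by simp
  have "Re w \<noteq> -1"
  proof
    assume "Re w = -1"
    with cs have "Im w = 0" by simp
    with \<open>Re w = -1\<close> w(2) show False by (simp add: complex_eq_iff)
  qed
  have mult_eq: "w * Complex x y = Complex (Re w * x - Im w * y) (Im w * x + Re w * y)" for x y
    by (simp add: complex_eq_iff)
  have "(\<integral>\<^sup>+z. f (w * z) \<partial>lborel)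
        = (\<integral>\<^sup>+p. F (Re w *\<^sub>R fst p - Im w *\<^sub>R snd p, Im w *\<^sub>R fst p + Re w *\<^sub>R snd p)
              \<partial>(lborel \<Otimes>\<^sub>M lborel))"
    by (subst nn_integral_lborel_complex) (auto simp: F_def mult_eq)
  also have "\<dots> = (\<integral>\<^sup>+p. F p \<partial>(lborel \<Otimes>\<^sub>M lborel))"
    by (rule nn_integral_lborel_pair_rotation[OF _ cs \<open>Re w \<noteq> -1\<close>]) simp
  also have "\<dots> = (\<integral>\<^sup>+z. f z \<partial>lborel)"
    by (subst nn_integral_lborel_complex) (auto simp: F_def)
  finally show ?thesis .
qed

lemma nn_integral_lborel_complex_rotate:
  fixes f :: "complex \<Rightarrow> ennreal" and w :: complex
  assumes [measurable]: "f \<in> borel_measurable borel" and w: "cmod w = 1"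
  shows "(\<integral>\<^sup>+z. f (w * z) \<partial>lborel) = (\<integral>\<^sup>+z. f z \<partial>lborel)"
proof -
  define r where "r = csqrt w"
  have "Re r \<ge> 0" unfolding r_def by (rule Re_csqrt)
  then have "r \<noteq> -1" by auto
  moreover have "cmod r = 1" using w by (simp add: r_def)
  ultimately have r: "cmod r = 1" "r \<noteq> -1" by auto
  have w_eq: "w = r * r" unfolding r_def by (metis power2_csqrt power2_eq_square)
  have "(\<integral>\<^sup>+z. f (w * z) \<partial>lborel) = (\<integral>\<^sup>+z. (\<lambda>u. f (r * u)) (r * z) \<partial>lborel)"
    by (simp add: w_eq mult.assoc)
  also have "\<dots> = (\<integral>\<^sup>+z. f (r * z) \<partial>lborel)"
    by (rule nn_integral_lborel_complex_rotate_aux[OF _ r]) simp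
  also have "\<dots> = (\<integral>\<^sup>+z. f z \<partial>lborel)"
    by (rule nn_integral_lborel_complex_rotate_aux[OF _ r]) simp
  finally show ?thesis .
qed

section \<open>The standard complex Gaussian\<close>

lemma sets_cgauss [measurable_cong, simp]: "sets cgauss = sets borel"
  by (simp add: cgauss_def)

lemma space_cgauss [simp]: "space cgauss = UNIV"
  by (simp add: cgauss_def)

definition cgauss_density :: "complex \<Rightarrow> real" where
  "cgauss_density z = exp (- (cmod z)\<^sup>2) / pi"

lemma borel_measurable_cgauss_density [measurable]: "cgauss_density \<in> borel_measurable borel"
  unfolding cgauss_density_def by measurable

lemma cgauss_density_nonneg: "cgauss_density z \<ge> 0"
  by (simp add: cgauss_density_def)

lemma cgauss_eq_density: "cgauss = density lborel (\<lambda>z. ennreal (cgauss_density z))"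
  by (simp add: cgauss_def cgauss_density_def)

lemma cgauss_density_Complex:
  "cgauss_density (Complex x y)
   = normal_density 0 (1 / sqrt 2) x * normal_density 0 (1 / sqrt 2) y"
proof -
  have "cgauss_density (Complex x y) = exp (- x\<^sup>2 - y\<^sup>2) / pi"
    by (simp add: cgauss_density_def cmod_power2)
  also have "\<dots> = (exp (- x\<^sup>2) / sqrt pi) * (exp (- y\<^sup>2) / sqrt pi)"
    by (simp add: exp_diff exp_minus field_simps)
  also have "\<dots> = normal_density 0 (1 / sqrt 2) x * normal_density 0 (1 / sqrt 2) y"
    by (simp add: normal_density_def power_divide real_sqrt_mult)
  finally show ?thesis .
qed

lemma prob_space_cgauss: "prob_space cgauss"
proof
  let ?nd = "\<lambda>x. ennreal (normal_density 0 (1 / sqrt 2) x)"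
  have nd_total: "(\<integral>\<^sup>+x. ?nd x \<partial>lborel) = 1"
  proof -
    interpret prob_space "density lborel ?nd"
      by (rule prob_space_normal_density) simp
    from emeasure_space_1 show ?thesis by (simp add: emeasure_density)
  qed
  have "emeasure cgauss (space cgauss) = (\<integral>\<^sup>+z. ennreal (cgauss_density z) \<partial>lborel)"
    by (simp add: cgauss_eq_density emeasure_density)
  also have "\<dots> = (\<integral>\<^sup>+p. ennreal (cgauss_density (Complex (fst p) (snd p))) \<partial>(lborel \<Otimes>\<^sub>M lborel))"
    by (rule nn_integral_lborel_complex) measurable
  also have "\<dots> = (\<integral>\<^sup>+x. \<integral>\<^sup>+y. ?nd x * ?nd y \<partial>lborel \<partial>lborel)"
    by (subst lborel.nn_integral_fst[symmetric])
      (auto simp: cgauss_density_Complex ennreal_mult')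
  also have "\<dots> = 1"
    by (subst nn_integral_cmult) (auto simp: nd_total)
  finally show "emeasure cgauss (space cgauss) = 1" .
qed

interpretation cgauss: prob_space cgauss
  by (rule prob_space_cgauss)

lemma distr_cgauss_unit_mult:
  assumes w: "cmod w = 1"
  shows "distr cgauss borel (\<lambda>z. w * z) = cgauss"
proof (rule measure_eqI)
  fix A :: "complex set"
  assume "A \<in> sets (distr cgauss borel (\<lambda>z. w * z))"
  then have [measurable]: "A \<in> sets borel" by simp
  have [measurable]: "(\<lambda>z. w * z) -` A \<in> sets borel"
    by (rule measurable_sets_borel[of "\<lambda>z. w * z" borel A]) auto
  have "emeasure (distr cgauss borel (\<lambda>z. w * z)) A = emeasure cgauss ((\<lambda>z. w * z) -` A)"
    by (subst emeasure_distr) auto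
  also have "\<dots> = (\<integral>\<^sup>+z. (\<lambda>u. ennreal (cgauss_density u) * indicator A u) (w * z) \<partial>lborel)"
    by (subst cgauss_eq_density, subst emeasure_density)
      (auto simp: cgauss_density_def norm_mult w intro!: nn_integral_cong split: split_indicator)
  also have "\<dots> = (\<integral>\<^sup>+u. ennreal (cgauss_density u) * indicator A u \<partial>lborel)"
    by (rule nn_integral_lborel_complex_rotate[OF _ w]) simp
  also have "\<dots> = emeasure cgauss A"
    by (simp add: cgauss_eq_density emeasure_density)
  finally show "emeasure (distr cgauss borel (\<lambda>z. w * z)) A = emeasure cgauss A" .
qed simp

lemma cgauss_pair_eq_density:
  "cgauss \<Otimes>\<^sub>M cgauss = density (lborel \<Otimes>\<^sub>M lborel)
     (\<lambda>p. ennreal (cgauss_density (fst p)) * ennreal (cgauss_density (snd p)))"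
proof -
  have "cgauss \<Otimes>\<^sub>M cgauss = density (lborel \<Otimes>\<^sub>M lborel)
          (\<lambda>(x, y). ennreal (cgauss_density x) * ennreal (cgauss_density y))"
    unfolding cgauss_eq_density
    by (rule pair_measure_density)
      (auto simp: cgauss_eq_density[symmetric] cgauss.sigma_finite_measure_axioms
        lborel.sigma_finite_measure_axioms)
  then show ?thesis by (simp add: split_beta')
qed

text \<open>The joint density of two independent \<open>CN(0,1)\<close> variables depends only on
  \<open>|u|\<^sup>2 + |v|\<^sup>2\<close>, which is invariant under real rotations of \<open>(u, v)\<close>.\<close>
lemma cgauss_density_pair_rotation:
  fixes c s :: real and u v :: complex
  assumes "c\<^sup>2 + s\<^sup>2 = 1"
  shows "cgauss_density (of_real c * u + of_real s * v) * cgauss_density (of_real (- s) * u + of_real c * v)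
         = cgauss_density u * cgauss_density v"
proof -
  have "(cmod (of_real c * u + of_real s * v))\<^sup>2 + (cmod (of_real (- s) * u + of_real c * v))\<^sup>2
        = (c\<^sup>2 + s\<^sup>2) * ((Re u)\<^sup>2 + (Im u)\<^sup>2 + (Re v)\<^sup>2 + (Im v)\<^sup>2)"
    by (simp only: cmod_power2) (simp add: power2_eq_square algebra_simps)
  also have "\<dots> = (cmod u)\<^sup>2 + (cmod v)\<^sup>2"
    using assms by (simp add: cmod_power2)
  finally show ?thesis
    by (simp add: cgauss_density_def exp_add[symmetric])
qed

text \<open>If \<open>Z\<^sub>1, Z\<^sub>2\<close> are independent \<open>CN(0,1)\<close> and \<open>c\<^sup>2 + s\<^sup>2 = 1\<close>, then
  \<open>c Z\<^sub>1 + s Z\<^sub>2\<close> is \<open>CN(0,1)\<close>: it is the first component of a rotated pair.\<close>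
lemma distr_cgauss_pair_real_rotation:
  fixes c s :: real
  assumes cs: "c\<^sup>2 + s\<^sup>2 = 1" "c \<noteq> -1"
  shows "distr (cgauss \<Otimes>\<^sub>M cgauss) borel (\<lambda>p. of_real c * fst p + of_real s * snd p) = cgauss"
proof (rule measure_eqI)
  fix A :: "complex set"
  assume "A \<in> sets (distr (cgauss \<Otimes>\<^sub>M cgauss) borel (\<lambda>p. of_real c * fst p + of_real s * snd p))"
  then have [measurable]: "A \<in> sets borel" by simp
  define T where "T = (\<lambda>p::complex \<times> complex. of_real c * fst p + of_real s * snd p)"
  define G where "G = (\<lambda>p::complex \<times> complex.
                         ennreal (cgauss_density (fst p)) * ennreal (cgauss_density (snd p)))"
  have [measurable]: "G \<in> borel_measurable borel"
    unfolding G_def borel_prod[symmetric] by measurable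
  define H where "H = (\<lambda>q::complex \<times> complex. G q * indicator A (fst q))"
  have H_borel [measurable]: "H \<in> borel_measurable borel"
    unfolding H_def G_def borel_prod[symmetric] by measurable
  have T_meas: "T \<in> measurable (cgauss \<Otimes>\<^sub>M cgauss) borel"
    unfolding T_def by measurable
  have T_borel: "T \<in> measurable (borel \<Otimes>\<^sub>M borel) borel"
    unfolding T_def by measurable
  have [measurable]: "T -` A \<in> sets (borel \<Otimes>\<^sub>M borel)"
    using measurable_sets[OF T_borel \<open>A \<in> sets borel\<close>] by (simp add: space_pair_measure)
  have "emeasure (distr (cgauss \<Otimes>\<^sub>M cgauss) borel T) A = emeasure (cgauss \<Otimes>\<^sub>M cgauss) (T -` A)"
    by (subst emeasure_distr[OF T_meas]) (auto simp: space_pair_measure)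
  also have "\<dots> = (\<integral>\<^sup>+p. G p * indicator (T -` A) p \<partial>(lborel \<Otimes>\<^sub>M lborel))"
    unfolding cgauss_pair_eq_density G_def[symmetric]
    by (rule emeasure_density) (auto simp: G_def)
  also have "\<dots> = (\<integral>\<^sup>+p. H (c *\<^sub>R fst p - (- s) *\<^sub>R snd p, (- s) *\<^sub>R fst p + c *\<^sub>R snd p)
                   \<partial>(lborel \<Otimes>\<^sub>M lborel))"
  proof (intro nn_integral_cong)
    fix p :: "complex \<times> complex"
    have "G (c *\<^sub>R fst p - (- s) *\<^sub>R snd p, (- s) *\<^sub>R fst p + c *\<^sub>R snd p) = G p"
      using cgauss_density_pair_rotation[OF cs(1), of "fst p" "snd p"]
      by (simp add: G_def scaleR_conv_of_real ennreal_mult''[symmetric] cgauss_density_nonneg)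
    then show "G p * indicator (T -` A) p
               = H (c *\<^sub>R fst p - (- s) *\<^sub>R snd p, (- s) *\<^sub>R fst p + c *\<^sub>R snd p)"
      by (simp add: H_def T_def scaleR_conv_of_real indicator_def)
  qed
  also have "\<dots> = (\<integral>\<^sup>+p. H p \<partial>(lborel \<Otimes>\<^sub>M lborel))"
    using cs by (intro nn_integral_lborel_pair_rotation[OF H_borel]) simp_all
  also have "\<dots> = (\<integral>\<^sup>+p. G p * indicator (A \<times> UNIV) p \<partial>(lborel \<Otimes>\<^sub>M lborel))"
    by (intro nn_integral_cong) (auto simp: H_def indicator_def)
  also have "\<dots> = emeasure (cgauss \<Otimes>\<^sub>M cgauss) (A \<times> UNIV)"
    unfolding cgauss_pair_eq_density G_def[symmetric]
    by (rule emeasure_density[symmetric]) (auto simp: G_def)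
  also have "\<dots> = emeasure cgauss A"
    using cgauss.emeasure_space_1 by (simp add: cgauss.emeasure_pair_measure_Times)
  finally show "emeasure (distr (cgauss \<Otimes>\<^sub>M cgauss) borel
                  (\<lambda>p. of_real c * fst p + of_real s * snd p)) A = emeasure cgauss A"
    by (simp add: T_def)
qed simp

text \<open>Combining phases and real rotations: \<open>a Z\<^sub>1 + b Z\<^sub>2 \<sim> CN(0,1)\<close> whenever
  \<open>|a|\<^sup>2 + |b|\<^sup>2 = 1\<close>.\<close>
lemma distr_cgauss_pair_lincomb:
  fixes a b :: complex
  assumes ab: "(cmod a)\<^sup>2 + (cmod b)\<^sup>2 = 1"
  shows "distr (cgauss \<Otimes>\<^sub>M cgauss) borel (\<lambda>p. a * fst p + b * snd p) = cgauss"
proof -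
  have polar: "of_real (cmod z) * cis (Arg z) = z" for z
    using rcis_cmod_Arg[of z] by (simp add: rcis_def)
  have phases: "distr (cgauss \<Otimes>\<^sub>M cgauss) (borel \<Otimes>\<^sub>M borel)
                  (\<lambda>(x, y). (cis (Arg a) * x, cis (Arg b) * y)) = cgauss \<Otimes>\<^sub>M cgauss"
  proof -
    have "distr cgauss borel (\<lambda>x. cis (Arg a) * x) \<Otimes>\<^sub>M distr cgauss borel (\<lambda>x. cis (Arg b) * x)
          = distr (cgauss \<Otimes>\<^sub>M cgauss) (borel \<Otimes>\<^sub>M borel) (\<lambda>(x, y). (cis (Arg a) * x, cis (Arg b) * y))"
      by (rule pair_measure_distr)
        (auto simp: distr_cgauss_unit_mult cgauss.sigma_finite_measure_axioms)
    then show ?thesis by (simp add: distr_cgauss_unit_mult)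
  qed
  have m_phases: "(\<lambda>(x, y). (cis (Arg a) * x, cis (Arg b) * y))
                  \<in> measurable (cgauss \<Otimes>\<^sub>M cgauss) (borel \<Otimes>\<^sub>M borel)"
    by measurable
  have m_moduli: "(\<lambda>p. of_real (cmod a) * fst p + of_real (cmod b) * snd p)
                  \<in> measurable (borel \<Otimes>\<^sub>M borel) (borel :: complex measure)"
    by measurable
  have "distr (cgauss \<Otimes>\<^sub>M cgauss) borel (\<lambda>p. a * fst p + b * snd p)
        = distr (distr (cgauss \<Otimes>\<^sub>M cgauss) (borel \<Otimes>\<^sub>M borel)
            (\<lambda>(x, y). (cis (Arg a) * x, cis (Arg b) * y))) borel
            (\<lambda>p. of_real (cmod a) * fst p + of_real (cmod b) * snd p)"
    by (subst distr_distr[OF m_moduli m_phases])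
      (simp add: comp_def split_beta mult.assoc[symmetric] polar)
  also have "\<dots> = cgauss"
    unfolding phases using ab
    by (intro distr_cgauss_pair_real_rotation) (simp, smt (verit) norm_ge_zero)
  finally show ?thesis .
qed

lemma prob_space_PiM_cgauss: "prob_space (\<Pi>\<^sub>M i\<in>I. cgauss)"
  by (rule prob_space_PiM) (rule prob_space_cgauss)

lemma distr_sets_cong: "sets N = sets N' \<Longrightarrow> distr M N f = distr M N' f"
  by (rule distr_cong) auto

lemma measurable_PiM_cgauss_lincomb [measurable]:
  "(\<lambda>v. \<Sum>i\<in>I. a i * v i) \<in> measurable (\<Pi>\<^sub>M i\<in>I. cgauss) (borel :: complex measure)"
proof -
  have "(\<lambda>v. v i) \<in> measurable (\<Pi>\<^sub>M i\<in>I. cgauss) (borel :: complex measure)" if "i \<in> I" for i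
    using measurable_component_singleton[OF that, of "\<lambda>_. cgauss"]
    by (simp add: measurable_cong_sets[OF refl sets_cgauss])
  then show ?thesis by (intro borel_measurable_sum borel_measurable_times) auto
qed

lemma distr_PiM_cgauss_insert_lincomb:
  assumes "finite I" "i \<notin> I"
  shows "distr (\<Pi>\<^sub>M j\<in>insert i I. cgauss) borel (\<lambda>v. \<Sum>j\<in>insert i I. a j * v j)
         = distr (cgauss \<Otimes>\<^sub>M (\<Pi>\<^sub>M j\<in>I. cgauss)) borel (\<lambda>p. a i * fst p + (\<Sum>j\<in>I. a j * snd p j))"
proof -
  have PiM_insert: "(\<Pi>\<^sub>M j\<in>insert i I. cgauss)
      = distr (cgauss \<Otimes>\<^sub>M (\<Pi>\<^sub>M j\<in>I. cgauss)) (\<Pi>\<^sub>M j\<in>insert i I. cgauss) (\<lambda>(x, X). X(i := x))"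
    using distr_pair_PiM_eq_PiM[of I "\<lambda>_. cgauss" i] prob_space_cgauss assms by simp
  have "(\<lambda>p. (snd p)(i := fst p))
        \<in> measurable (cgauss \<Otimes>\<^sub>M (\<Pi>\<^sub>M j\<in>I. cgauss)) (\<Pi>\<^sub>M j\<in>insert i I. cgauss)"
    by (rule measurable_fun_upd[where J=I]) auto
  then have m_upd: "(\<lambda>(x, X). X(i := x))
                    \<in> measurable (cgauss \<Otimes>\<^sub>M (\<Pi>\<^sub>M j\<in>I. cgauss)) (\<Pi>\<^sub>M j\<in>insert i I. cgauss)"
    by (simp add: split_beta')
  have sum_upd: "(\<Sum>j\<in>insert i I. a j * (X(i := x)) j) = a i * x + (\<Sum>j\<in>I. a j * X j)" for X x
    using assms by (simp add: sum.insert) (intro sum.cong, auto)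
  show ?thesis
    by (subst PiM_insert, subst distr_distr[OF measurable_PiM_cgauss_lincomb m_upd])
      (simp add: comp_def split_beta sum_upd del: fun_upd_apply)
qed

lemma distr_cgauss_pair_indep_lincomb:
  assumes N: "prob_space N" and Y: "Y \<in> measurable N borel" "distr N borel Y = cgauss"
    and ab: "(cmod a)\<^sup>2 + (cmod b)\<^sup>2 = 1"
  shows "distr (cgauss \<Otimes>\<^sub>M N) borel (\<lambda>p. a * fst p + b * Y (snd p)) = cgauss"
proof -
  have m_pair: "(\<lambda>(x, y). (x, Y y)) \<in> measurable (cgauss \<Otimes>\<^sub>M N) (borel \<Otimes>\<^sub>M borel)"
    using Y(1) by measurable
  have "distr cgauss borel (\<lambda>x. x) \<Otimes>\<^sub>M distr N borel Y
        = distr (cgauss \<Otimes>\<^sub>M N) (borel \<Otimes>\<^sub>M borel) (\<lambda>(x, y). (x, Y y))"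
    using Y by (intro pair_measure_distr) (auto simp: cgauss.sigma_finite_measure_axioms)
  moreover have "distr cgauss borel (\<lambda>x. x) = cgauss" by (rule distr_id2) simp
  ultimately have pair_law: "distr (cgauss \<Otimes>\<^sub>M N) (borel \<Otimes>\<^sub>M borel) (\<lambda>(x, y). (x, Y y))
                             = cgauss \<Otimes>\<^sub>M cgauss"
    using Y(2) by simp
  have "distr (cgauss \<Otimes>\<^sub>M N) borel (\<lambda>p. a * fst p + b * Y (snd p))
        = distr (distr (cgauss \<Otimes>\<^sub>M N) (borel \<Otimes>\<^sub>M borel) (\<lambda>(x, y). (x, Y y))) borel
            (\<lambda>p. a * fst p + b * snd p)"
    by (subst distr_distr[OF _ m_pair]) (simp_all add: comp_def split_beta)
  also have "\<dots> = cgauss"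
    unfolding pair_law by (rule distr_cgauss_pair_lincomb[OF ab])
  finally show ?thesis .
qed

text \<open>Induction on \<open>I\<close>: with \<open>r\<^sup>2 = \<Sum>\<^sub>j\<^sub>\<in>\<^sub>I |a\<^sub>j|\<^sup>2 > 0\<close>, the tail \<open>\<Sum>\<^sub>j\<^sub>\<in>\<^sub>I a\<^sub>j Z\<^sub>j\<close> is \<open>r\<close> times
  a \<open>CN(0,1)\<close> variable independent of \<open>Z\<^sub>i\<close> (and it vanishes if \<open>r = 0\<close>).\<close>
lemma distr_PiM_cgauss_lincomb:
  assumes "finite I" "I \<noteq> {}" "(\<Sum>i\<in>I. (cmod (a i))\<^sup>2) = 1"
  shows "distr (\<Pi>\<^sub>M i\<in>I. cgauss) borel (\<lambda>v. \<Sum>i\<in>I. a i * v i) = cgauss"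
  using assms
proof (induction I arbitrary: a rule: finite_ne_induct)
  case (singleton i)
  then have ai: "cmod (a i) = 1" by (simp add: power2_eq_1_iff) (smt (verit) norm_ge_zero)
  have m_coord: "(\<lambda>v. v i) \<in> measurable (\<Pi>\<^sub>M j\<in>{i}. cgauss) borel"
    using measurable_component_singleton[of i "{i}" "\<lambda>_. cgauss"]
    by (simp add: measurable_cong_sets[OF refl sets_cgauss])
  have "distr (\<Pi>\<^sub>M j\<in>{i}. cgauss) borel (\<lambda>v. \<Sum>j\<in>{i}. a j * v j)
        = distr (distr (\<Pi>\<^sub>M j\<in>{i}. cgauss) borel (\<lambda>v. v i)) borel (\<lambda>z. a i * z)"
    by (subst distr_distr[OF _ m_coord]) (simp_all add: comp_def)
  also have "distr (\<Pi>\<^sub>M j\<in>{i}. cgauss) borel (\<lambda>v. v i) = cgauss"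
    using distr_PiM_component[of "{i}" "\<lambda>_. cgauss" i] prob_space_cgauss
    by (simp add: distr_sets_cong[of borel cgauss])
  finally show ?case by (simp add: distr_cgauss_unit_mult ai)
next
  case (insert i I)
  interpret PiI: prob_space "\<Pi>\<^sub>M j\<in>I. cgauss" by (rule prob_space_PiM_cgauss)
  define r where "r = sqrt (\<Sum>j\<in>I. (cmod (a j))\<^sup>2)"
  have r_nonneg: "r \<ge> 0" unfolding r_def by (intro real_sqrt_ge_zero sum_nonneg) auto
  have r_sq: "r\<^sup>2 = (\<Sum>j\<in>I. (cmod (a j))\<^sup>2)"
    unfolding r_def by (intro real_sqrt_pow2 sum_nonneg) auto
  have ai_r: "(cmod (a i))\<^sup>2 + r\<^sup>2 = 1" using insert.prems insert.hyps r_sq by simp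
  note split = distr_PiM_cgauss_insert_lincomb[OF insert.hyps(1,3)]
  show ?case
  proof (cases "r = 0")
    case True
    then have "(\<Sum>j\<in>I. (cmod (a j))\<^sup>2) = 0" using r_sq by simp
    then have tail_zero: "\<forall>j\<in>I. a j = 0"
      using insert.hyps by (subst (asm) sum_nonneg_eq_0_iff) auto
    have ai: "cmod (a i) = 1"
      using ai_r True by (simp add: power2_eq_1_iff) (smt (verit) norm_ge_zero)
    have "distr (cgauss \<Otimes>\<^sub>M (\<Pi>\<^sub>M j\<in>I. cgauss)) borel (\<lambda>p. a i * fst p + (\<Sum>j\<in>I. a j * snd p j))
          = distr (distr (cgauss \<Otimes>\<^sub>M (\<Pi>\<^sub>M j\<in>I. cgauss)) cgauss fst) borel (\<lambda>z. a i * z)"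
      by (subst distr_distr) (simp_all add: comp_def tail_zero)
    also have "\<dots> = cgauss" by (simp add: PiI.distr_pair_fst distr_cgauss_unit_mult ai)
    finally show ?thesis using split by simp
  next
    case False
    then have r_pos: "r > 0" using r_nonneg by simp
    define b where "b j = a j / of_real r" for j
    have "(\<Sum>j\<in>I. (cmod (b j))\<^sup>2) = 1"
      using r_pos r_sq
      by (simp add: b_def norm_divide power_divide sum_divide_distrib[symmetric])
        (metis power_not_zero less_irrefl)
    then have tail: "distr (\<Pi>\<^sub>M j\<in>I. cgauss) borel (\<lambda>v. \<Sum>j\<in>I. b j * v j) = cgauss"
      by (rule insert.IH)
    have tail_eq: "a i * fst p + (\<Sum>j\<in>I. a j * snd p j)
                   = a i * fst p + of_real r * (\<Sum>j\<in>I. b j * snd p j)" for p :: "complex \<times> _"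
      using r_pos by (simp add: b_def sum_distrib_left)
    have "distr (cgauss \<Otimes>\<^sub>M (\<Pi>\<^sub>M j\<in>I. cgauss)) borel (\<lambda>p. a i * fst p + (\<Sum>j\<in>I. a j * snd p j))
          = distr (cgauss \<Otimes>\<^sub>M (\<Pi>\<^sub>M j\<in>I. cgauss)) borel
              (\<lambda>p. a i * fst p + of_real r * (\<lambda>v. \<Sum>j\<in>I. b j * v j) (snd p))"
      by (simp add: tail_eq)
    also have "\<dots> = cgauss"
      using ai_r r_nonneg
      by (intro distr_cgauss_pair_indep_lincomb[OF prob_space_PiM_cgauss _ tail]) simp_all
    finally show ?thesis using split by simp
  qed
qed

section \<open>Independent linear combinations of i.i.d. complex Gaussians\<close>

lemma indep_vars_PiM_cgauss_coords:
  "prob_space.indep_vars (\<Pi>\<^sub>M k\<in>(UNIV :: 'k set). cgauss) (\<lambda>_. cgauss) (\<lambda>k x. x k) UNIV"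
proof -
  interpret Omega: prob_space "\<Pi>\<^sub>M k\<in>(UNIV :: 'k set). cgauss" by (rule prob_space_PiM_cgauss)
  have coord: "(\<lambda>x. x k) \<in> measurable (\<Pi>\<^sub>M k\<in>(UNIV :: 'k set). cgauss) cgauss" for k
    by (rule measurable_component_singleton) simp
  have "distr (\<Pi>\<^sub>M k\<in>(UNIV :: 'k set). cgauss) (\<Pi>\<^sub>M k\<in>UNIV. cgauss) (\<lambda>x. \<lambda>k\<in>UNIV. x k)
        = distr (\<Pi>\<^sub>M k\<in>(UNIV :: 'k set). cgauss) (\<Pi>\<^sub>M k\<in>UNIV. cgauss) (\<lambda>x. x)"
    by (intro distr_cong) (auto simp: space_PiM)
  then have joint: "distr (\<Pi>\<^sub>M k\<in>(UNIV :: 'k set). cgauss) (\<Pi>\<^sub>M k\<in>UNIV. cgauss) (\<lambda>x. \<lambda>k\<in>UNIV. x k)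
                    = (\<Pi>\<^sub>M k\<in>(UNIV :: 'k set). cgauss)"
    by simp
  have marginals: "(\<Pi>\<^sub>M k\<in>(UNIV :: 'k set). distr (\<Pi>\<^sub>M k\<in>(UNIV :: 'k set). cgauss) cgauss (\<lambda>x. x k))
                   = (\<Pi>\<^sub>M k\<in>(UNIV :: 'k set). cgauss)"
    by (intro PiM_cong refl distr_PiM_component) (auto simp: prob_space_cgauss)
  show ?thesis
    by (subst Omega.indep_vars_iff_distr_eq_PiM) (auto simp: coord joint marginals)
qed

text \<open>Unit-norm linear combinations of an i.i.d. \<open>CN(0,1)\<close> family over pairwise
  disjoint finite blocks of coordinates are again i.i.d. \<open>CN(0,1)\<close>: each combination is \<open>CN(0,1)\<close>,
  and combinations over disjoint blocks are independent.\<close>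
lemma distr_PiM_cgauss_block_lincombs:
  fixes B :: "'j \<Rightarrow> 'k set" and a :: "'j \<Rightarrow> 'k \<Rightarrow> complex"
  assumes disj: "disjoint_family B" and fin: "\<And>j. finite (B j)" and ne: "\<And>j. B j \<noteq> {}"
    and unit: "\<And>j. (\<Sum>k\<in>B j. (cmod (a j k))\<^sup>2) = 1"
  shows "distr (\<Pi>\<^sub>M k\<in>UNIV. cgauss) (\<Pi>\<^sub>M j\<in>UNIV. cgauss) (\<lambda>\<omega>. \<lambda>j\<in>UNIV. \<Sum>k\<in>B j. a j k * \<omega> k)
         = (\<Pi>\<^sub>M j\<in>UNIV. cgauss)"
proof -
  let ?Omega = "\<Pi>\<^sub>M k\<in>(UNIV :: 'k set). cgauss"
  interpret Omega: prob_space ?Omega by (rule prob_space_PiM_cgauss)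
  interpret PP: product_prob_space "\<lambda>_::'k. cgauss" UNIV
    by (rule product_prob_spaceI) (rule prob_space_cgauss)
  define X where "X j \<omega> = (\<Sum>k\<in>B j. a j k * \<omega> k)" for j and \<omega> :: "'k \<Rightarrow> complex"
  have lincomb_meas: "(\<lambda>v. \<Sum>k\<in>B j. a j k * v k) \<in> measurable (\<Pi>\<^sub>M k\<in>B j. cgauss) cgauss" for j
    by (simp add: measurable_cong_sets[OF refl sets_cgauss])
  have "Omega.indep_vars (\<lambda>j. \<Pi>\<^sub>M k\<in>B j. cgauss) (\<lambda>j \<omega>. restrict (\<lambda>k. \<omega> k) (B j)) UNIV"
    using disj by (intro Omega.indep_vars_restrict[OF indep_vars_PiM_cgauss_coords]) auto
  then have "Omega.indep_vars (\<lambda>_. cgauss)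
               (\<lambda>j \<omega>. (\<lambda>v. \<Sum>k\<in>B j. a j k * v k) (restrict (\<lambda>k. \<omega> k) (B j))) UNIV"
    by (rule Omega.indep_vars_compose2) (rule lincomb_meas)
  then have indep: "Omega.indep_vars (\<lambda>_. cgauss) X UNIV"
    by (rule Omega.indep_vars_cong[THEN iffD1, rotated -1])
      (auto simp: X_def fun_eq_iff intro!: sum.cong)
  have X_meas: "X j \<in> measurable ?Omega cgauss" for j
    using indep unfolding Omega.indep_vars_def by auto
  have marginal: "distr ?Omega cgauss (X j) = cgauss" for j
  proof -
    have m_restrict: "(\<lambda>x. restrict x (B j)) \<in> measurable ?Omega (\<Pi>\<^sub>M k\<in>B j. cgauss)"
      by (rule measurable_restrict_subset) simp
    have "distr ?Omega cgauss (X j)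
          = distr (distr ?Omega (\<Pi>\<^sub>M k\<in>B j. cgauss) (\<lambda>x. restrict x (B j))) cgauss
              (\<lambda>v. \<Sum>k\<in>B j. a j k * v k)"
      by (subst distr_distr[OF lincomb_meas m_restrict])
        (auto simp: comp_def X_def intro!: distr_cong sum.cong)
    also have "\<dots> = distr (\<Pi>\<^sub>M k\<in>B j. cgauss) borel (\<lambda>v. \<Sum>k\<in>B j. a j k * v k)"
      by (subst PP.distr_PiM_restrict_finite) (auto simp: fin intro: distr_sets_cong)
    also have "\<dots> = cgauss"
      by (rule distr_PiM_cgauss_lincomb[OF fin ne unit])
    finally show ?thesis .
  qed
  have "distr ?Omega (\<Pi>\<^sub>M j\<in>UNIV. cgauss) (\<lambda>x. \<lambda>j\<in>UNIV. X j x) = (\<Pi>\<^sub>M j\<in>UNIV. cgauss)"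
    using indep by (subst (asm) Omega.indep_vars_iff_distr_eq_PiM) (auto simp: X_meas marginal)
  then show ?thesis by (simp add: X_def)
qed

section \<open>The two channels\<close>

lemma borel_measurable_vec_lambda [measurable]:
  fixes f :: "'i::finite \<Rightarrow> 'a \<Rightarrow> 'b::euclidean_space"
  assumes "\<And>i. f i \<in> borel_measurable M"
  shows "(\<lambda>x. \<chi> i. f i x) \<in> borel_measurable M"
proof (subst borel_measurable_euclidean_space, intro ballI)
  fix b :: "'b ^ 'i"
  assume "b \<in> Basis"
  then obtain i u where b: "b = axis i u" "u \<in> Basis" unfolding Basis_vec_def by auto
  have "(\<lambda>x. f i x \<bullet> u) \<in> borel_measurable M" using assms by measurable
  then show "(\<lambda>x. (\<chi> i. f i x) \<bullet> b) \<in> borel_measurable M"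
    by (simp add: b inner_axis)
qed

lemma borel_measurable_vec_nth [measurable]:
  fixes f :: "'a \<Rightarrow> 'b::euclidean_space ^ 'i::finite"
  assumes "f \<in> borel_measurable M"
  shows "(\<lambda>x. f x $ i) \<in> borel_measurable M"
proof -
  have "(\<lambda>v::'b ^ 'i. v $ i) \<in> borel_measurable borel"
    by (intro borel_measurable_continuous_onI continuous_intros)
  from measurable_compose[OF assms this] show ?thesis .
qed

lemma borel_measurable_matrix_mult [measurable]:
  fixes f :: "'a \<Rightarrow> complex ^ 'k::finite ^ 'i::finite" and g :: "'a \<Rightarrow> complex ^ 'j::finite ^ 'k"
  assumes [measurable]: "f \<in> borel_measurable M" "g \<in> borel_measurable M"
  shows "(\<lambda>x. f x ** g x) \<in> borel_measurable M"
  unfolding matrix_matrix_mult_def by measurable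

lemma borel_measurable_diag_mat [measurable]:
  fixes f :: "'a \<Rightarrow> complex ^ 'n::finite"
  assumes [measurable]: "f \<in> borel_measurable M"
  shows "(\<lambda>x. diag_mat (f x)) \<in> borel_measurable M"
proof -
  have "(\<lambda>x. if i = j then f x $ i else 0) \<in> borel_measurable M" for i j :: 'n
    by (cases "i = j") simp_all
  then show ?thesis unfolding diag_mat_def by (intro borel_measurable_vec_lambda)
qed

lemma measurable_PiM_cgauss_component:
  "k \<in> I \<Longrightarrow> (\<lambda>f. f k) \<in> measurable (\<Pi>\<^sub>M i\<in>I. cgauss) (borel :: complex measure)"
  using measurable_component_singleton[of k I "\<lambda>_. cgauss"]
  by (simp add: measurable_cong_sets[OF refl sets_cgauss])

lemma measurable_vec_of_PiM [measurable]:
  "(\<lambda>f. \<chi> i. f i) \<in> measurable (\<Pi>\<^sub>M i\<in>UNIV. cgauss) (borel :: (complex ^ 'i::finite) measure)"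
  by (intro borel_measurable_vec_lambda measurable_PiM_cgauss_component) simp

lemma measurable_mat_of_PiM [measurable]:
  "(\<lambda>f. \<chi> i j. f (i, j))
   \<in> measurable (\<Pi>\<^sub>M ij\<in>UNIV. cgauss) (borel :: (complex ^ 'c::finite ^ 'r::finite) measure)"
  by (intro borel_measurable_vec_lambda measurable_PiM_cgauss_component) simp

lemma prob_space_iid_cgauss_vec: "prob_space (iid_cgauss_vec :: (complex ^ 'i::finite) measure)"
  unfolding iid_cgauss_vec_def
  by (rule prob_space.prob_space_distr[OF prob_space_PiM_cgauss measurable_vec_of_PiM])

lemma prob_space_iid_cgauss_mat:
  "prob_space (iid_cgauss_mat :: (complex ^ 'c::finite ^ 'r::finite) measure)"
  unfolding iid_cgauss_mat_def
  by (rule prob_space.prob_space_distr[OF prob_space_PiM_cgauss measurable_mat_of_PiM])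

lemma sets_iid_cgauss_vec [measurable_cong, simp]: "sets iid_cgauss_vec = sets borel"
  by (simp add: iid_cgauss_vec_def)

lemma sets_iid_cgauss_mat [measurable_cong, simp]: "sets iid_cgauss_mat = sets borel"
  by (simp add: iid_cgauss_mat_def)

definition unstack :: "complex ^ ('q::finite \<times> 'm::finite) \<Rightarrow> complex ^ 'q ^ 'm" where
  "unstack s = (\<chi> m q. s $ (q, m))"

lemma borel_measurable_unstack [measurable]: "unstack \<in> borel_measurable borel"
  unfolding unstack_def by measurable

text \<open>The post-processing map of the receiver: \<open>(L Y)\<^sub>m\<^sub>n = \<Sum>\<^sub>q P\<^sub>n\<^sub>q Y\<^sub>(\<^sub>q\<^sub>,\<^sub>m\<^sub>)\<^sub>n\<close> combines the
  \<open>Q\<close> rows \<open>(q, m)\<close> of \<open>Y\<close> belonging to receive antenna \<open>m\<close>, column by column.\<close>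
definition combine_rows ::
  "complex ^ 'q::finite ^ 'n::finite \<Rightarrow> complex ^ 'n ^ ('q \<times> 'm::finite) \<Rightarrow> complex ^ 'n ^ 'm" where
  "combine_rows P W = (\<chi> m n. \<Sum>q\<in>UNIV. P $ n $ q * W $ (q, m) $ n)"

lemma borel_measurable_combine_rows [measurable]: "combine_rows P \<in> borel_measurable borel"
  unfolding combine_rows_def by measurable

lemma combine_rows_channel2:
  fixes P :: "complex ^ 'q::finite ^ 'n::finite" and x :: "complex ^ 'n"
    and s :: "complex ^ ('q \<times> 'm::finite)" and W :: "complex ^ 'n ^ ('q \<times> 'm)"
  shows "combine_rows P ((\<chi> r c. s $ r * x $ c) + W)
         = unstack s ** transpose P ** diag_mat x + combine_rows P W"
  by (simp add: vec_eq_iff combine_rows_def unstack_def matrix_matrix_mult_def transpose_def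
      diag_mat_def algebra_simps sum.distrib sum_distrib_right sum_distrib_left if_distrib
      sum.delta' cong: if_cong)

text \<open>\<open>unstack\<close> only relabels coordinates, so it maps i.i.d. to i.i.d.\<close>
lemma distr_iid_cgauss_vec_unstack:
  "distr (iid_cgauss_vec :: (complex ^ ('q::finite \<times> 'm::finite)) measure) borel unstack
   = iid_cgauss_mat"
proof -
  let ?Pi_qm = "\<Pi>\<^sub>M r\<in>(UNIV :: ('q \<times> 'm) set). cgauss"
  let ?Pi_mq = "\<Pi>\<^sub>M ij\<in>(UNIV :: ('m \<times> 'q) set). cgauss"
  have reindex: "distr ?Pi_qm ?Pi_mq (\<lambda>\<omega>. \<lambda>ij\<in>UNIV. \<omega> (prod.swap ij)) = ?Pi_mq"
    using distr_PiM_reindex[of UNIV "\<lambda>_. cgauss" prod.swap UNIV] prob_space_cgauss by simp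
  have m_reindex: "(\<lambda>\<omega>. \<lambda>ij\<in>UNIV. \<omega> (prod.swap ij)) \<in> measurable ?Pi_qm ?Pi_mq"
    by (intro measurable_restrict measurable_component_singleton) simp
  have "distr (iid_cgauss_vec :: (complex ^ ('q \<times> 'm)) measure) borel unstack
        = distr ?Pi_qm borel (\<lambda>f. \<chi> i j. f (j, i))"
    unfolding iid_cgauss_vec_def by (subst distr_distr) (auto simp: comp_def unstack_def)
  also have "\<dots> = distr (distr ?Pi_qm ?Pi_mq (\<lambda>\<omega>. \<lambda>ij\<in>UNIV. \<omega> (prod.swap ij))) borel
                     (\<lambda>f. \<chi> i j. f (i, j))"
    by (subst distr_distr[OF measurable_mat_of_PiM m_reindex]) (simp add: comp_def)
  also have "\<dots> = iid_cgauss_mat"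
    unfolding reindex iid_cgauss_mat_def ..
  finally show ?thesis .
qed

text \<open>Key lemma: since each row of \<open>P\<close> has unit norm, \<open>L W'\<close> is again an i.i.d.
  \<open>CN(0,1)\<close> matrix; entry \<open>(m, n)\<close> combines the block \<open>{((q, m), n) | q}\<close> of \<open>W'\<close>.\<close>
lemma distr_iid_cgauss_mat_combine_rows:
  fixes P :: "complex ^ 'q::finite ^ 'n::finite"
  assumes P: "\<And>i. norm (P $ i) = 1"
  shows "distr (iid_cgauss_mat :: (complex ^ 'n ^ ('q \<times> 'm::finite)) measure) borel (combine_rows P)
         = iid_cgauss_mat"
proof -
  let ?Omega = "\<Pi>\<^sub>M k\<in>(UNIV :: (('q \<times> 'm) \<times> 'n) set). cgauss"
  define B :: "'m \<times> 'n \<Rightarrow> (('q \<times> 'm) \<times> 'n) set"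
    where "B j = range (\<lambda>q. ((q, fst j), snd j))" for j
  define a :: "'m \<times> 'n \<Rightarrow> ('q \<times> 'm) \<times> 'n \<Rightarrow> complex"
    where "a j k = P $ snd j $ fst (fst k)" for j k
  have inj_block: "inj (\<lambda>q. ((q, m), n) :: ('q \<times> 'm) \<times> 'n)" for m n
    by (auto intro: injI)
  have sum_block: "(\<Sum>k\<in>B (m, n). g k) = (\<Sum>q\<in>UNIV. g ((q, m), n))"
    for m n and g :: "('q \<times> 'm) \<times> 'n \<Rightarrow> 'b::comm_monoid_add"
    unfolding B_def by (simp add: sum.reindex[OF inj_block])
  have unit: "(\<Sum>k\<in>B j. (cmod (a j k))\<^sup>2) = 1" for j
  proof -
    obtain m n where j: "j = (m, n)" by (cases j)
    have "(\<Sum>k\<in>B j. (cmod (a j k))\<^sup>2) = (\<Sum>q\<in>UNIV. (cmod (P $ n $ q))\<^sup>2)"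
      unfolding j by (subst sum_block) (simp add: a_def)
    also have "\<dots> = (norm (P $ n))\<^sup>2"
      by (simp add: norm_vec_def L2_set_def sum_nonneg)
    finally show ?thesis by (simp add: P)
  qed
  have blocks: "distr ?Omega (\<Pi>\<^sub>M j\<in>UNIV. cgauss) (\<lambda>\<omega>. \<lambda>j\<in>UNIV. \<Sum>k\<in>B j. a j k * \<omega> k)
                = (\<Pi>\<^sub>M j\<in>(UNIV :: ('m \<times> 'n) set). cgauss)"
    by (rule distr_PiM_cgauss_block_lincombs[OF _ _ _ unit])
      (auto simp: B_def disjoint_family_on_def)
  have m_blocks: "(\<lambda>\<omega>. \<lambda>j\<in>UNIV. \<Sum>k\<in>B j. a j k * \<omega> k)
                  \<in> measurable ?Omega (\<Pi>\<^sub>M j\<in>(UNIV :: ('m \<times> 'n) set). cgauss)"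
    by (intro measurable_restrict) (simp add: measurable_cong_sets[OF refl sets_cgauss])
  have entries: "combine_rows P (\<chi> i j. f (i, j))
                 = (\<chi> i j. (\<lambda>j\<in>UNIV. \<Sum>k\<in>B j. a j k * f k) (i, j))" for f
    by (simp add: combine_rows_def a_def sum_block)
  have "distr (iid_cgauss_mat :: (complex ^ 'n ^ ('q \<times> 'm)) measure) borel (combine_rows P)
        = distr ?Omega borel (\<lambda>f. combine_rows P (\<chi> i j. f (i, j)))"
    unfolding iid_cgauss_mat_def by (subst distr_distr) (auto simp: comp_def)
  also have "\<dots> = distr (distr ?Omega (\<Pi>\<^sub>M j\<in>(UNIV :: ('m \<times> 'n) set). cgauss)
                          (\<lambda>\<omega>. \<lambda>j\<in>UNIV. \<Sum>k\<in>B j. a j k * \<omega> k)) borel (\<lambda>f. \<chi> i j. f (i, j))"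
    by (subst distr_distr[OF measurable_mat_of_PiM m_blocks]) (simp add: comp_def entries)
  also have "\<dots> = iid_cgauss_mat"
    unfolding blocks iid_cgauss_mat_def ..
  finally show ?thesis .
qed

lemma distr_channel2_noise:
  fixes P :: "complex ^ 'q::finite ^ 'n::finite"
  assumes P: "\<And>i. norm (P $ i) = 1"
  shows "distr ((iid_cgauss_vec :: (complex ^ ('q \<times> 'm::finite)) measure) \<Otimes>\<^sub>M
                (iid_cgauss_mat :: (complex ^ 'n ^ ('q \<times> 'm)) measure))
           (borel \<Otimes>\<^sub>M borel) (\<lambda>(s, W). (unstack s, combine_rows P W))
         = (iid_cgauss_mat :: (complex ^ 'q ^ 'm) measure) \<Otimes>\<^sub>M
           (iid_cgauss_mat :: (complex ^ 'n ^ 'm) measure)"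
proof -
  interpret W: prob_space "iid_cgauss_mat :: (complex ^ 'n ^ 'm) measure"
    by (rule prob_space_iid_cgauss_mat)
  have "distr (iid_cgauss_vec :: (complex ^ ('q \<times> 'm)) measure) borel unstack \<Otimes>\<^sub>M
        distr (iid_cgauss_mat :: (complex ^ 'n ^ ('q \<times> 'm)) measure) borel (combine_rows P)
        = distr (iid_cgauss_vec \<Otimes>\<^sub>M iid_cgauss_mat) (borel \<Otimes>\<^sub>M borel)
            (\<lambda>(s, W). (unstack s, combine_rows P W))"
    by (rule pair_measure_distr)
      (auto simp: distr_iid_cgauss_mat_combine_rows[OF P] W.sigma_finite_measure_axioms)
  then show ?thesis
    by (simp add: distr_iid_cgauss_vec_unstack distr_iid_cgauss_mat_combine_rows[OF P])
qed

lemma distr_input_channel2_noise: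
  fixes P :: "complex ^ 'q::finite ^ 'n::finite" and \<mu> :: "(complex ^ 'n) measure"
  assumes P: "\<And>i. norm (P $ i) = 1" and sets_\<mu>: "sets \<mu> = sets borel"
  defines "K \<equiv> \<lambda>(s :: complex ^ ('q \<times> 'm::finite), W :: complex ^ 'n ^ ('q \<times> 'm)).
                  (unstack s, combine_rows P W)"
  shows "distr (\<mu> \<Otimes>\<^sub>M (iid_cgauss_vec \<Otimes>\<^sub>M iid_cgauss_mat))
           (borel \<Otimes>\<^sub>M (borel \<Otimes>\<^sub>M borel)) (\<lambda>(x, y). (x, K y))
         = \<mu> \<Otimes>\<^sub>M ((iid_cgauss_mat :: (complex ^ 'q ^ 'm) measure) \<Otimes>\<^sub>M
                  (iid_cgauss_mat :: (complex ^ 'n ^ 'm) measure))"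
proof -
  interpret SW: prob_space "(iid_cgauss_mat :: (complex ^ 'q ^ 'm) measure) \<Otimes>\<^sub>M
                            (iid_cgauss_mat :: (complex ^ 'n ^ 'm) measure)"
    by (intro prob_space_pair prob_space_iid_cgauss_mat)
  have K_meas: "K \<in> measurable (iid_cgauss_vec \<Otimes>\<^sub>M iid_cgauss_mat) (borel \<Otimes>\<^sub>M borel)"
    unfolding K_def by measurable
  have K_law: "distr (iid_cgauss_vec \<Otimes>\<^sub>M iid_cgauss_mat) (borel \<Otimes>\<^sub>M borel) K
               = (iid_cgauss_mat :: (complex ^ 'q ^ 'm) measure) \<Otimes>\<^sub>M
                 (iid_cgauss_mat :: (complex ^ 'n ^ 'm) measure)"
    unfolding K_def by (rule distr_channel2_noise[OF P])
  have "distr \<mu> borel (\<lambda>x. x) \<Otimes>\<^sub>M distr (iid_cgauss_vec \<Otimes>\<^sub>M iid_cgauss_mat) (borel \<Otimes>\<^sub>M borel) K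
        = distr (\<mu> \<Otimes>\<^sub>M (iid_cgauss_vec \<Otimes>\<^sub>M iid_cgauss_mat))
            (borel \<Otimes>\<^sub>M (borel \<Otimes>\<^sub>M borel)) (\<lambda>(x, y). (x, K y))"
    by (rule pair_measure_distr)
      (auto simp: K_meas K_law SW.sigma_finite_measure_axioms measurable_cong_sets[OF sets_\<mu> refl])
  moreover have "distr \<mu> borel (\<lambda>x. x) = \<mu>" by (rule distr_id2) (simp add: sets_\<mu>)
  ultimately show ?thesis by (simp add: K_law)
qed

text \<open>The first channel is the second one followed by the post-processing
  \<open>(x, Y') \<mapsto> (x, L Y')\<close>: both are images of the law of \<open>(x, s', W')\<close>, and by
  \<open>combine_rows_channel2\<close> the composite map factors through \<open>(x, unstack s', L W')\<close>,
  whose law is that of \<open>(x, S, W)\<close>.\<close>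
lemma channel1_eq_distr_channel2:
  fixes P :: "complex ^ 'q::finite ^ 'n::finite" and \<mu> :: "(complex ^ 'n) measure"
  assumes P: "\<And>i. norm (P $ i) = 1" and \<mu>: "input_law \<mu>"
  shows "(channel1 P \<mu> :: ((complex ^ 'n) \<times> (complex ^ 'n ^ 'm::finite)) measure)
         = distr (channel2 \<mu> :: ((complex ^ 'n) \<times> (complex ^ 'n ^ ('q \<times> 'm))) measure)
             (borel \<Otimes>\<^sub>M borel) (\<lambda>(x, Y). (x, combine_rows P Y))"
proof -
  have sets_\<mu> [measurable_cong]: "sets \<mu> = sets borel"
    using \<mu> by (simp add: input_law_def)
  let ?In = "\<mu> \<Otimes>\<^sub>M ((iid_cgauss_vec :: (complex ^ ('q \<times> 'm)) measure) \<Otimes>\<^sub>M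
                    (iid_cgauss_mat :: (complex ^ 'n ^ ('q \<times> 'm)) measure))"
  define out2 where "out2 = (\<lambda>(x :: complex ^ 'n, s :: complex ^ ('q \<times> 'm),
                               W :: complex ^ 'n ^ ('q \<times> 'm)). (x, (\<chi> r c. s $ r * x $ c) + W))"
  define post where "post = (\<lambda>(x :: complex ^ 'n, Y :: complex ^ 'n ^ ('q \<times> 'm)).
                               (x, combine_rows P Y))"
  define noise where "noise = (\<lambda>(x :: complex ^ 'n, y). (x, (\<lambda>(s :: complex ^ ('q \<times> 'm),
                                  W :: complex ^ 'n ^ ('q \<times> 'm)). (unstack s, combine_rows P W)) y))"
  have noise_law: "distr ?In (borel \<Otimes>\<^sub>M (borel \<Otimes>\<^sub>M borel)) noise
                   = \<mu> \<Otimes>\<^sub>M ((iid_cgauss_mat :: (complex ^ 'q ^ 'm) measure) \<Otimes>\<^sub>M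
                            (iid_cgauss_mat :: (complex ^ 'n ^ 'm) measure))"
    unfolding noise_def by (rule distr_input_channel2_noise[OF P sets_\<mu>])
  define out1 where "out1 = (\<lambda>(x :: complex ^ 'n, S :: complex ^ 'q ^ 'm,
                               W :: complex ^ 'n ^ 'm). (x, S ** transpose P ** diag_mat x + W))"
  have post_out2: "post \<circ> out2 = out1 \<circ> noise"
    by (auto simp: fun_eq_iff post_def out2_def out1_def noise_def combine_rows_channel2)
  have [measurable]: "post \<in> measurable (borel \<Otimes>\<^sub>M borel) (borel \<Otimes>\<^sub>M borel)"
    unfolding post_def by measurable
  have [measurable]: "out2 \<in> measurable ?In (borel \<Otimes>\<^sub>M borel)"
    unfolding out2_def by measurable
  have [measurable]: "out1 \<in> measurable (borel \<Otimes>\<^sub>M (borel \<Otimes>\<^sub>M borel)) (borel \<Otimes>\<^sub>M borel)"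
    unfolding out1_def by measurable
  have [measurable]: "noise \<in> measurable ?In (borel \<Otimes>\<^sub>M (borel \<Otimes>\<^sub>M borel))"
    unfolding noise_def by measurable
  have "distr (channel2 \<mu>) (borel \<Otimes>\<^sub>M borel) (\<lambda>(x, Y). (x, combine_rows P Y))
        = distr (distr ?In (borel \<Otimes>\<^sub>M borel) out2) (borel \<Otimes>\<^sub>M borel) post"
    by (simp add: channel2_def out2_def post_def)
  also have "\<dots> = distr (distr ?In (borel \<Otimes>\<^sub>M (borel \<Otimes>\<^sub>M borel)) noise) (borel \<Otimes>\<^sub>M borel) out1"
    by (simp add: distr_distr post_out2)
  also have "\<dots> = channel1 P \<mu>"
    unfolding noise_law by (simp add: channel1_def out1_def)
  finally show ?thesis ..
qed

lemma prob_space_channel2: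
  fixes \<mu> :: "(complex ^ 'n::finite) measure"
  assumes \<mu>: "input_law \<mu>"
  shows "prob_space (channel2 \<mu> :: ((complex ^ 'n) \<times> (complex ^ 'n ^ ('q::finite \<times> 'm::finite))) measure)"
proof -
  have [measurable_cong]: "sets \<mu> = sets borel" and "prob_space \<mu>"
    using \<mu> by (auto simp: input_law_def)
  interpret joint: prob_space "\<mu> \<Otimes>\<^sub>M ((iid_cgauss_vec :: (complex ^ ('q \<times> 'm)) measure) \<Otimes>\<^sub>M
                                  (iid_cgauss_mat :: (complex ^ 'n ^ ('q \<times> 'm)) measure))"
    by (intro prob_space_pair prob_space_iid_cgauss_vec prob_space_iid_cgauss_mat) fact
  show ?thesis
    unfolding channel2_def by (rule joint.prob_space_distr) measurable
qed

theorem mainTheorem3: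
  fixes P :: "complex ^ 'q::finite ^ 'n::finite"
  assumes "CARD('q) \<le> CARD('n)"
    and "\<And>i. norm (P $ i) = 1"
  shows "(\<forall>\<mu>. input_law \<mu> \<longrightarrow>
            mutual_info (channel1 P \<mu> :: ((complex ^ 'n) \<times> (complex ^ 'n ^ 'm::finite)) measure)
            \<le> mutual_info (channel2 \<mu> :: ((complex ^ 'n) \<times> (complex ^ 'n ^ ('q \<times> 'm))) measure))
       \<and> (\<forall>\<rho>>0. capacity (channel1 P :: _ \<Rightarrow> ((complex ^ 'n) \<times> (complex ^ 'n ^ 'm)) measure) \<rho>
                 \<le> capacity (channel2 :: _ \<Rightarrow> ((complex ^ 'n) \<times> (complex ^ 'n ^ ('q \<times> 'm))) measure) \<rho>)"
proof -
  have mi_le: "mutual_info (channel1 P \<mu> :: ((complex ^ 'n) \<times> (complex ^ 'n ^ 'm)) measure)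
               \<le> mutual_info (channel2 \<mu> :: ((complex ^ 'n) \<times> (complex ^ 'n ^ ('q \<times> 'm))) measure)"
    if \<mu>: "input_law \<mu>" for \<mu>
    unfolding channel1_eq_distr_channel2[OF assms(2) \<mu>]
    by (rule mutual_info_distr_le[OF prob_space_channel2[OF \<mu>]]) (auto simp: channel2_def)
  then show ?thesis
    unfolding capacity_def by (blast intro: SUP_mono)
qed

end
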